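(* For every sufficiently small $\eta>0$ there exists $\nu_0>0$ such that for every $\nu\in(0,\nu_0]$ there exists $\alpha_0>0$ such that for every $\alpha\in(0,\alpha_0]$ there exists $n_0$ such that for all $n\ge n_0$: if $G$ is an $(\alpha,\eta,\nu)$-superextremal biclique on $n$ vertices with partition $V(G)=A\uplus B$ and $M$ is a matching in $G[B]$ with exactly $|B|-|A|$ edges, then $G$ has a Hamilton cycle containing all edges of $M$.
   Context: $d(v,X)$ is the number of neighbours of $v$ in $X$. A graph $G$ on $n$ vertices is an $(\alpha,\varepsilon,\nu)$-superextremal biclique if there is a partition $V(G)=A\uplus B$ with: (B1) $0\le |B|-|A|\le\alpha n$; (B2) $d(a,B)\ge(1/2-\varepsilon)n$ for all but at most $\alpha n$ vertices $a\in A$; (B3) $d(a,B)\ge\nu n$ for all $a\in A$; (B4) $d(b,A)\ge(1/2-\varepsilon)n$ for all but at most $\alpha n$ vertices $b\in B$; (B5) $d(b,A)\ge(1/4-\varepsilon)n$ for all $b\in B$; (B6) if $|A|\ne\lfloor n/2\rfloor$, then $d(b,B)\le 2\nu n$ for all $b\in B$. (Here it is applied with $\varepsilon=\eta$.) *)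

theory Defs
  imports Complex_Main "HOL-Library.Disjoint_Sets"
begin

definition simple_graph :: "'a set \<Rightarrow> ('a \<Rightarrow> 'a \<Rightarrow> bool) \<Rightarrow> bool" where
  "simple_graph V E \<longleftrightarrow> finite V \<and> (\<forall>u v. E u v \<longrightarrow> E v u) \<and> (\<forall>v. \<not> E v v)
     \<and> (\<forall>u v. E u v \<longrightarrow> u \<in> V \<and> v \<in> V)"

definition deg_in :: "('a \<Rightarrow> 'a \<Rightarrow> bool) \<Rightarrow> 'a \<Rightarrow> 'a set \<Rightarrow> nat" where
  "deg_in E v X = card {u \<in> X. E v u}"

definition superextremal_biclique ::
  "real \<Rightarrow> real \<Rightarrow> real \<Rightarrow> 'a set \<Rightarrow> ('a \<Rightarrow> 'a \<Rightarrow> bool) \<Rightarrow> 'a set \<Rightarrow> 'a set \<Rightarrow> bool" where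
  "superextremal_biclique \<alpha> \<epsilon> \<nu> V E A B \<longleftrightarrow>
     (let n = real (card V) in
       A \<union> B = V \<and> A \<inter> B = {} \<and>
       card A \<le> card B \<and> real (card B) - real (card A) \<le> \<alpha> * n \<and>
       real (card {a \<in> A. real (deg_in E a B) < (1/2 - \<epsilon>) * n}) \<le> \<alpha> * n \<and>
       (\<forall>a\<in>A. real (deg_in E a B) \<ge> \<nu> * n) \<and>
       real (card {b \<in> B. real (deg_in E b A) < (1/2 - \<epsilon>) * n}) \<le> \<alpha> * n \<and>
       (\<forall>b\<in>B. real (deg_in E b A) \<ge> (1/4 - \<epsilon>) * n) \<and>
       (card A \<noteq> card V div 2 \<longrightarrow> (\<forall>b\<in>B. real (deg_in E b B) \<le> 2 * \<nu> * n)))"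

definition matching_in :: "('a \<Rightarrow> 'a \<Rightarrow> bool) \<Rightarrow> 'a set \<Rightarrow> 'a set set \<Rightarrow> bool" where
  "matching_in E X M \<longleftrightarrow>
     (\<forall>e\<in>M. \<exists>u v. e = {u, v} \<and> u \<in> X \<and> v \<in> X \<and> E u v) \<and> disjoint M"

definition hamilton_cycle :: "'a set \<Rightarrow> ('a \<Rightarrow> 'a \<Rightarrow> bool) \<Rightarrow> 'a list \<Rightarrow> bool" where
  "hamilton_cycle V E vs \<longleftrightarrow> distinct vs \<and> set vs = V \<and> length vs \<ge> 3 \<and>
     (\<forall>i < length vs. E (vs ! i) (vs ! ((i + 1) mod length vs)))"

definition cycle_edges :: "'a list \<Rightarrow> 'a set set" where
  "cycle_edges vs = {{vs ! i, vs ! ((i + 1) mod length vs)} | i. i < length vs}"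

end

theory Submission
  imports Defs
begin

text \<open>Absorb every exceptional object into a short path whose ends are typical vertices: each
  matching edge and each remaining low-degree vertex of \<open>B\<close> is flanked by two typical
  \<open>A\<close>-neighbours, and each low-degree vertex of \<open>A\<close> by two typical \<open>B\<close>-neighbours; the remaining
  typical vertices are trivial paths. Because \<open>|M| = |B| - |A|\<close>, this leaves equally many, about
  \<open>n/2\<close>, paths with ends in \<open>A\<close> and with ends in \<open>B\<close>. Typical vertices miss at most
  \<open>(\<eta> + \<alpha>) n\<close> typical vertices of the other side, so if the paths are alternated around a cycle,
  every join that is not an edge can be repaired by reversing a segment of the cycle (a 2-opt move),
  and the resulting Hamilton cycle traverses every matching edge.\<close>

section \<open>Cyclic sequences of paths\<close>

definition broken_joins :: "('a \<Rightarrow> 'a \<Rightarrow> bool) \<Rightarrow> 'a list list \<Rightarrow> nat set" where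
  "broken_joins E us =
     {i. i < length us \<and> \<not> E (last (us ! i)) (hd (us ! (Suc i mod length us)))}"

definition alternating :: "'a set \<Rightarrow> 'a set \<Rightarrow> 'a list list \<Rightarrow> bool" where
  "alternating X Y us \<longleftrightarrow> (\<forall>i < length us.
     hd (us ! i) \<in> (if even i then X else Y) \<and> last (us ! i) \<in> (if even i then X else Y))"

lemma finite_broken_joins [simp]: "finite (broken_joins E us)"
  unfolding broken_joins_def by auto

lemma successively_concat:
  assumes "\<forall>U \<in> set us. U \<noteq> [] \<and> successively E U"
    and "\<forall>i. Suc i < length us \<longrightarrow> E (last (us ! i)) (hd (us ! Suc i))"
  shows "successively E (concat us)"
  using assms
proof (induction us)
  case Nil
  then show ?case by simp
next
  case (Cons U us)
  have IH: "successively E (concat us)"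
    using Cons.prems by (intro Cons.IH) (auto dest: spec[of _ "Suc _"])
  show ?case
  proof (cases us)
    case Nil
    then show ?thesis using Cons.prems by simp
  next
    case (Cons V vs)
    moreover have "E (last U) (hd V)" using Cons.prems(2)[rule_format, of 0] Cons by simp
    ultimately show ?thesis using IH Cons.prems(1) by (simp add: successively_append_iff)
  qed
qed

lemma successively_rev_symmetric:
  "\<forall>u v. E u v \<longrightarrow> E v u \<Longrightarrow> successively E (rev xs) \<longleftrightarrow> successively E xs"
  unfolding successively_rev by (metis (no_types, lifting) successively_mono)

lemma inj_on_add_mod: "inj_on (\<lambda>j. (n + j) mod m) {..<m :: nat}"
proof -
  have "a = b" if "(n + a) mod m = (n + b) mod m" "b < m" "a \<le> b" for a b
  proof -
    have "m dvd b - a"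
      using that mod_eq_dvd_iff_nat[of "n + a" "n + b" m] by simp
    moreover have "b - a < m" using that by simp
    ultimately show "a = b" using that by (metis dvd_imp_le le_antisym not_gr0 not_le diff_is_0_eq)
  qed
  then show ?thesis by (intro inj_onI) (metis lessThan_iff nat_le_linear)
qed

lemma broken_joins_rotate:
  "broken_joins E (rotate n us) = {j. j < length us \<and> (n + j) mod length us \<in> broken_joins E us}"
proof -
  have "(\<not> E (last (rotate n us ! j)) (hd (rotate n us ! (Suc j mod length us)))) =
        (\<not> E (last (us ! ((n + j) mod length us)))
              (hd (us ! (Suc ((n + j) mod length us) mod length us))))"
    if j: "j < length us" for j
  proof -
    have "Suc j mod length us < length us" using j by (intro mod_less_divisor) linarith
    then have "rotate n us ! (Suc j mod length us) = us ! ((n + Suc j mod length us) mod length us)"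
      by (rule nth_rotate)
    moreover have "(n + Suc j mod length us) mod length us = Suc ((n + j) mod length us) mod length us"
      by (metis add_Suc_right mod_Suc_eq mod_add_right_eq)
    ultimately show ?thesis using j by (simp add: nth_rotate)
  qed
  then show ?thesis
    unfolding broken_joins_def by auto (metis gr_implies_not_zero mod_less_divisor not_gr_zero)
qed

lemma broken_joins_rotate_last:
  assumes "i \<in> broken_joins E us"
  shows "length us - 1 \<in> broken_joins E (rotate (Suc i) us)"
proof -
  have "i < length us" using assms unfolding broken_joins_def by simp
  then have "Suc i + (length us - 1) = i + length us" by simp
  then have "(Suc i + (length us - 1)) mod length us = i" using \<open>i < length us\<close> by simp
  then show ?thesis using assms \<open>i < length us\<close> unfolding broken_joins_rotate by auto
qed

lemma card_broken_joins_rotate_le: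
  "card (broken_joins E (rotate n us)) \<le> card (broken_joins E us)"
proof (rule card_inj_on_le)
  show "inj_on (\<lambda>j. (n + j) mod length us) (broken_joins E (rotate n us))"
    by (rule inj_on_subset[OF inj_on_add_mod]) (auto simp: broken_joins_def)
  show "(\<lambda>j. (n + j) mod length us) ` broken_joins E (rotate n us) \<subseteq> broken_joins E us"
    unfolding broken_joins_rotate by auto
qed simp

lemma alternating_rotate:
  assumes "alternating X Y us" "even (length us)"
  shows "alternating X Y (rotate n us) \<or> alternating Y X (rotate n us)"
proof -
  have ends: "hd (rotate n us ! j) \<in> (if even (n + j) then X else Y) \<and>
              last (rotate n us ! j) \<in> (if even (n + j) then X else Y)"
    if j: "j < length us" for j
  proof -
    have "(n + j) mod length us < length us" using j by (intro mod_less_divisor) linarith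
    then have "hd (us ! ((n + j) mod length us)) \<in> (if even ((n + j) mod length us) then X else Y) \<and>
               last (us ! ((n + j) mod length us)) \<in> (if even ((n + j) mod length us) then X else Y)"
      using assms(1) unfolding alternating_def by blast
    moreover have "even ((n + j) mod length us) = even (n + j)"
      using assms(2) by (simp add: dvd_mod_iff)
    ultimately show ?thesis by (simp only: nth_rotate[OF j])
  qed
  show ?thesis
  proof (cases "even n")
    case True
    then have "alternating X Y (rotate n us)"
      unfolding alternating_def using ends by (metis length_rotate even_add)
    then show ?thesis ..
  next
    case False
    then have "alternating Y X (rotate n us)"
      unfolding alternating_def using ends by (metis length_rotate even_add)
    then show ?thesis ..
  qed
qed

definition almost_complete :: "('a \<Rightarrow> 'a \<Rightarrow> bool) \<Rightarrow> 'a set \<Rightarrow> 'a set \<Rightarrow> real \<Rightarrow> bool" where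
  "almost_complete E X Y D \<longleftrightarrow>
     (\<forall>x\<in>X. real (card {y\<in>Y. \<not> E x y}) \<le> D) \<and> (\<forall>y\<in>Y. real (card {x\<in>X. \<not> E y x}) \<le> D)"

lemma almost_complete_commute: "almost_complete E X Y D \<longleftrightarrow> almost_complete E Y X D"
  unfolding almost_complete_def by blast

lemma disjoint_nth_if_distinct_concat:
  assumes "distinct (concat us)" "\<forall>U\<in>set us. U \<noteq> []"
    and "i < length us" "j < length us" "i \<noteq> j"
  shows "set (us ! i) \<inter> set (us ! j) = {}"
proof -
  have "removeAll [] us = us" using assms(2) by (intro removeAll_id) blast
  then have "distinct us" using assms(1) by (simp add: distinct_concat_iff)
  then have "us ! i \<noteq> us ! j" using assms(3-5) by (simp add: nth_eq_iff_index_eq)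
  then show ?thesis using assms(1,3,4) by (simp add: distinct_concat_iff)
qed

lemma card_even_below: "card {q. q < 2 * N - 1 \<and> even q} = N"
proof -
  have "{q. q < 2 * N - 1 \<and> even q} = (\<lambda>i. 2 * i) ` {..<N}"
    by (auto elim!: evenE)
  moreover have "inj_on (\<lambda>i. 2 * i) {..<N}" by (auto simp: inj_on_def)
  ultimately show ?thesis by (simp add: card_image)
qed

lemma card_non_neighbours_le:
  assumes "inj_on f Q" "f ` Q \<subseteq> Y" "finite Y" "real (card {y\<in>Y. \<not> E v y}) \<le> D"
  shows "real (card {q\<in>Q. \<not> E v (f q)}) \<le> D"
proof -
  have "card {q\<in>Q. \<not> E v (f q)} = card (f ` {q\<in>Q. \<not> E v (f q)})"
    using assms(1) by (intro card_image[symmetric]) (auto intro: inj_on_subset)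
  also have "\<dots> \<le> card {y\<in>Y. \<not> E v y}"
    using assms(2,3) by (intro card_mono) auto
  finally show ?thesis using assms(4) by linarith
qed

text \<open>Pigeonhole: there are \<open>N\<close> even positions \<open>q\<close>; at most \<open>D\<close> of them are excluded because \<open>t\<close>
  misses the end of unit \<open>q\<close>, and at most \<open>D\<close> because \<open>s\<close> misses the start of unit \<open>q + 1\<close>.\<close>
lemma exists_reversal_point:
  assumes len: "length us = 2 * N"
    and dist: "distinct (concat us)" and ne: "\<forall>U\<in>set us. U \<noteq> []"
    and alt: "alternating X Y us" and fin: "finite X" "finite Y"
    and ac: "almost_complete E X Y D" and ND: "real N > 2 * D"
    and "s \<in> X" "t \<in> Y"
  shows "\<exists>q. q < 2 * N - 1 \<and> even q \<and> E t (last (us ! q)) \<and> E s (hd (us ! Suc q))"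
proof -
  define Q where "Q = {q. q < 2 * N - 1 \<and> even q}"
  have Q: "Suc q < length us" "even q" if "q \<in> Q" for q
    using that len unfolding Q_def by auto
  have same_unit: "i = j" if "i < length us" "j < length us" "x \<in> set (us ! i)" "x \<in> set (us ! j)"
    for i j x
    using disjoint_nth_if_distinct_concat[OF dist ne, of i j] that by blast
  have nonempty: "us ! i \<noteq> []" if "i < length us" for i using ne that by simp
  have ends: "last (us ! q) \<in> X" "hd (us ! Suc q) \<in> Y" if "q \<in> Q" for q
    using alt[unfolded alternating_def, rule_format, of q] Q[OF that]
      alt[unfolded alternating_def, rule_format, of "Suc q"] by simp_all
  have "inj_on (\<lambda>q. last (us ! q)) Q"
  proof (rule inj_onI)
    fix a b assume "a \<in> Q" "b \<in> Q" and eq: "last (us ! a) = last (us ! b)"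
    then have "a < length us" "b < length us" using Q by (auto dest: Suc_lessD)
    moreover have "last (us ! a) \<in> set (us ! a)" "last (us ! b) \<in> set (us ! b)"
      using calculation by (simp_all add: nonempty)
    ultimately show "a = b" using same_unit eq by metis
  qed
  moreover have "(\<lambda>q. last (us ! q)) ` Q \<subseteq> X" using ends by blast
  moreover have "real (card {x\<in>X. \<not> E t x}) \<le> D"
    using ac \<open>t \<in> Y\<close> unfolding almost_complete_def by blast
  ultimately have F1: "real (card {q\<in>Q. \<not> E t (last (us ! q))}) \<le> D"
    by (rule card_non_neighbours_le[OF _ _ fin(1)])
  have "inj_on (\<lambda>q. hd (us ! Suc q)) Q"
  proof (rule inj_onI)
    fix a b assume "a \<in> Q" "b \<in> Q" and eq: "hd (us ! Suc a) = hd (us ! Suc b)"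
    then have "Suc a < length us" "Suc b < length us" using Q by auto
    moreover have "hd (us ! Suc a) \<in> set (us ! Suc a)" "hd (us ! Suc b) \<in> set (us ! Suc b)"
      using calculation by (simp_all add: nonempty)
    ultimately show "a = b" using same_unit eq by (metis Suc_inject)
  qed
  moreover have "(\<lambda>q. hd (us ! Suc q)) ` Q \<subseteq> Y" using ends by blast
  moreover have "real (card {y\<in>Y. \<not> E s y}) \<le> D"
    using ac \<open>s \<in> X\<close> unfolding almost_complete_def by blast
  ultimately have F2: "real (card {q\<in>Q. \<not> E s (hd (us ! Suc q))}) \<le> D"
    by (rule card_non_neighbours_le[OF _ _ fin(2)])
  have "finite Q" unfolding Q_def by auto
  have "card Q \<le> card ({q\<in>Q. \<not> E t (last (us ! q))} \<union> {q\<in>Q. \<not> E s (hd (us ! Suc q))}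
                     \<union> {q\<in>Q. E t (last (us ! q)) \<and> E s (hd (us ! Suc q))})"
    using \<open>finite Q\<close> by (intro card_mono) auto
  also have "\<dots> \<le> card {q\<in>Q. \<not> E t (last (us ! q))} + card {q\<in>Q. \<not> E s (hd (us ! Suc q))}
                     + card {q\<in>Q. E t (last (us ! q)) \<and> E s (hd (us ! Suc q))}"
    by (rule order_trans[OF card_Un_le add_right_mono[OF card_Un_le]])
  finally have "card Q \<le> \<dots>" .
  then have "card {q\<in>Q. E t (last (us ! q)) \<and> E s (hd (us ! Suc q))} > 0"
    using F1 F2 ND card_even_below[of N] unfolding Q_def by linarith
  then show ?thesis unfolding Q_def by (metis (no_types, lifting) card_gt_0_iff empty_Collect_eq mem_Collect_eq)
qed

text \<open>The 2-opt move: reverse the segment formed by units \<open>0, \<dots>, q\<close> of the cyclic sequence.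
  Only the two joins at the ends of the segment change.\<close>
definition reverse_prefix :: "nat \<Rightarrow> 'a list list \<Rightarrow> 'a list list" where
  "reverse_prefix q us = map rev (rev (take (Suc q) us)) @ drop (Suc q) us"

lemma length_reverse_prefix [simp]: "q < length us \<Longrightarrow> length (reverse_prefix q us) = length us"
  unfolding reverse_prefix_def by simp

lemma nth_reverse_prefix:
  "q < length us \<Longrightarrow> i < length us \<Longrightarrow>
     reverse_prefix q us ! i = (if i \<le> q then rev (us ! (q - i)) else us ! i)"
  unfolding reverse_prefix_def by (simp add: nth_append rev_nth)

lemma concat_reverse_prefix:
  "concat (reverse_prefix q us) = rev (concat (take (Suc q) us)) @ concat (drop (Suc q) us)"
  unfolding reverse_prefix_def by (simp add: rev_concat rev_map)

lemma distinct_concat_reverse_prefix: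
  "distinct (concat (reverse_prefix q us)) \<longleftrightarrow> distinct (concat us)"
  unfolding concat_reverse_prefix
  by (metis append_take_drop_id concat_append distinct_append distinct_rev set_rev)

lemma set_concat_reverse_prefix: "set (concat (reverse_prefix q us)) = set (concat us)"
  unfolding concat_reverse_prefix by (metis append_take_drop_id concat_append set_append set_rev)

lemma set_reverse_prefix_subset: "set (reverse_prefix q us) \<subseteq> set us \<union> rev ` set us"
  unfolding reverse_prefix_def by (auto dest: in_set_takeD in_set_dropD)

lemma alternating_reverse_prefix:
  assumes "alternating X Y us" "even q" "q < length us" "\<forall>U\<in>set us. U \<noteq> []"
  shows "alternating X Y (reverse_prefix q us)"
  unfolding alternating_def
proof (intro allI impI)
  fix i assume "i < length (reverse_prefix q us)"
  then have i: "i < length us" using assms(3) by simp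
  show "hd (reverse_prefix q us ! i) \<in> (if even i then X else Y) \<and>
        last (reverse_prefix q us ! i) \<in> (if even i then X else Y)"
  proof (cases "i \<le> q")
    case True
    have "q - i < length us" "even (q - i) = even i"
      using True assms(2,3) by auto
    then have "hd (us ! (q - i)) \<in> (if even i then X else Y) \<and>
               last (us ! (q - i)) \<in> (if even i then X else Y)"
      using assms(1) unfolding alternating_def by metis
    moreover have "reverse_prefix q us ! i = rev (us ! (q - i))"
      using True i assms(3) by (simp add: nth_reverse_prefix)
    ultimately show ?thesis by (simp add: hd_rev last_rev)
  next
    case False
    then show ?thesis using assms(1,3) i unfolding alternating_def by (simp add: nth_reverse_prefix)
  qed
qed

lemma card_broken_joins_reverse_prefix_less:
  assumes sym: "\<forall>u v. E u v \<longrightarrow> E v u" and ne: "\<forall>U\<in>set us. U \<noteq> []"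
    and q: "q < length us - 1" and broken: "length us - 1 \<in> broken_joins E us"
    and t: "E (last (us ! (length us - 1))) (last (us ! q))"
    and s: "E (hd (us ! 0)) (hd (us ! Suc q))"
  shows "card (broken_joins E (reverse_prefix q us)) < card (broken_joins E us)"
proof -
  define m where "m = length us"
  define us' where "us' = reverse_prefix q us"
  have "0 < m" using q unfolding m_def by linarith
  then have m: "q < m - 1" "Suc (m - 1) mod m = 0" using q unfolding m_def by auto
  have nth1: "us' ! i = rev (us ! (q - i))" if "i \<le> q" for i
    using that m unfolding us'_def m_def by (simp add: nth_reverse_prefix)
  have nth2: "us' ! i = us ! i" if "q < i" "i < m" for i
    using that m unfolding us'_def m_def by (simp add: nth_reverse_prefix)
  have nonempty: "us ! i \<noteq> []" if "i < m" for i using ne that unfolding m_def by simp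
  define f where "f i = (if i < q then q - 1 - i else i)" for i
  define S where "S = broken_joins E us \<inter> ({..<q} \<union> {q<..<m - 1})"
  have "broken_joins E us' \<subseteq> f ` S"
  proof
    fix j assume j: "j \<in> broken_joins E us'"
    then have jm: "j < m" and nb: "\<not> E (last (us' ! j)) (hd (us' ! (Suc j mod m)))"
      using m unfolding broken_joins_def us'_def m_def by auto
    consider "j < q" | "j = q" | "j = m - 1" | "q < j" "j < m - 1"
      using jm m by linarith
    then show "j \<in> f ` S"
    proof cases
      case 1
      then have "\<not> E (hd (us ! (q - j))) (last (us ! (q - Suc j)))"
        using nb m nth1[of j] nth1[of "Suc j"] nonempty[of "q - j"] nonempty[of "q - Suc j"]
        by (simp add: hd_rev last_rev)
      then have "q - 1 - j \<in> broken_joins E us"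
        using sym 1 m unfolding broken_joins_def m_def[symmetric] by (auto simp: Suc_diff_Suc)
      then have "q - 1 - j \<in> S" "f (q - 1 - j) = j" unfolding S_def f_def using 1 by auto
      then show ?thesis by (metis image_eqI)
    next
      case 2
      then show ?thesis
        using nb s m nth1[of q] nth2[of "Suc q"] nonempty[of 0] by (simp add: last_rev)
    next
      case 3
      then show ?thesis
        using nb t m nth1[of 0] nth2[of j] nonempty[of q] by (simp add: hd_rev m_def)
    next
      case 4
      then have "j \<in> broken_joins E us"
        using nb nth2[of j] nth2[of "Suc j"] unfolding broken_joins_def m_def by simp
      then have "j \<in> S" "f j = j" unfolding S_def f_def using 4 by auto
      then show ?thesis by (metis image_eqI)
    qed
  qed
  then have "card (broken_joins E us') \<le> card (f ` S)" by (intro card_mono) (auto simp: S_def)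
  also have "\<dots> \<le> card S" by (rule card_image_le) (simp add: S_def)
  also have "\<dots> \<le> card (broken_joins E us - {m - 1})" using m by (intro card_mono) (auto simp: S_def)
  also have "\<dots> < card (broken_joins E us)"
    using broken unfolding m_def by (intro card_Diff1_less) simp_all
  finally show ?thesis unfolding us'_def .
qed

lemma exists_reversal_with_fewer_broken_joins:
  assumes sym: "\<forall>u v. E u v \<longrightarrow> E v u"
    and len: "length us = 2 * N"
    and dist: "distinct (concat us)" and ne: "\<forall>U\<in>set us. U \<noteq> []"
    and alt: "alternating X Y us \<or> alternating Y X us" and fin: "finite X" "finite Y"
    and ac: "almost_complete E X Y D" and ND: "real N > 2 * D"
    and broken: "length us - 1 \<in> broken_joins E us"
  shows "\<exists>q. q < length us \<and>
           (alternating X Y (reverse_prefix q us) \<or> alternating Y X (reverse_prefix q us)) \<and>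
           card (broken_joins E (reverse_prefix q us)) < card (broken_joins E us)"
proof -
  have one_side: "\<exists>q. q < length us \<and> alternating X' Y' (reverse_prefix q us) \<and>
      card (broken_joins E (reverse_prefix q us)) < card (broken_joins E us)"
    if alt': "alternating X' Y' us" and fin': "finite X'" "finite Y'"
      and ac': "almost_complete E X' Y' D" for X' Y'
  proof -
    have "N > 0" using broken len unfolding broken_joins_def by auto
    then have "hd (us ! 0) \<in> X'" "last (us ! (2 * N - 1)) \<in> Y'"
      using alt'[unfolded alternating_def, rule_format, of 0]
        alt'[unfolded alternating_def, rule_format, of "2 * N - 1"] len by simp_all
    then obtain q where q: "q < 2 * N - 1" "even q"
      and "E (last (us ! (2 * N - 1))) (last (us ! q))" "E (hd (us ! 0)) (hd (us ! Suc q))"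
      using exists_reversal_point[OF len dist ne alt' fin' ac' ND] by blast
    then have "card (broken_joins E (reverse_prefix q us)) < card (broken_joins E us)"
      using broken len by (intro card_broken_joins_reverse_prefix_less[OF sym ne]) simp_all
    moreover have "alternating X' Y' (reverse_prefix q us)"
      using q len by (intro alternating_reverse_prefix[OF alt' _ _ ne]) simp_all
    ultimately show ?thesis using q len by (intro exI[of _ q]) auto
  qed
  from alt show ?thesis
  proof
    assume "alternating X Y us"
    then show ?thesis using one_side[OF _ fin ac] by blast
  next
    assume "alternating Y X us"
    moreover have "almost_complete E Y X D" using ac by (simp add: almost_complete_commute)
    ultimately show ?thesis using one_side[OF _ fin(2,1)] by blast
  qed
qed

lemma distinct_concat_rotate: "distinct (concat (rotate n us)) \<longleftrightarrow> distinct (concat us)"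
  unfolding rotate_drop_take
  by (metis append_take_drop_id concat_append distinct_append inf_commute)

lemma exists_rearrangement_without_broken_joins:
  assumes sym: "\<forall>u v. E u v \<longrightarrow> E v u"
    and len: "length us0 = 2 * N" and dist: "distinct (concat us0)"
    and ne: "\<forall>U\<in>set us0. U \<noteq> []"
    and alt: "alternating X Y us0" and fin: "finite X" "finite Y"
    and ac: "almost_complete E X Y D" and ND: "real N > 2 * D"
  shows "\<exists>us. length us = 2 * N \<and> set us \<subseteq> set us0 \<union> rev ` set us0 \<and>
           distinct (concat us) \<and> set (concat us) = set (concat us0) \<and> broken_joins E us = {}"
proof -
  define R where "R = set us0 \<union> rev ` set us0"
  have R_rev: "rev ` R \<subseteq> R" unfolding R_def by auto
  define admissible where "admissible us \<longleftrightarrow> length us = 2 * N \<and> set us \<subseteq> R \<and>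
     distinct (concat us) \<and> set (concat us) = set (concat us0) \<and>
     (alternating X Y us \<or> alternating Y X us)" for us
  have "admissible us0" unfolding admissible_def R_def using len dist alt by auto
  then obtain us where us: "admissible us"
    and min: "\<And>vs. admissible vs \<Longrightarrow> card (broken_joins E us) \<le> card (broken_joins E vs)"
    using ex_has_least_nat[of admissible us0 "\<lambda>us. card (broken_joins E us)"] by blast
  have "broken_joins E us = {}"
  proof (rule ccontr)
    assume "broken_joins E us \<noteq> {}"
    then obtain i where i: "i \<in> broken_joins E us" by auto
    define us1 where "us1 = rotate (Suc i) us"
    have admissible1: "admissible us1"
      using us alternating_rotate[of X Y us "Suc i"] alternating_rotate[of Y X us "Suc i"]
      unfolding admissible_def us1_def by (auto simp: distinct_concat_rotate simp del: rotate_Suc)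
    moreover have "\<forall>U\<in>set us1. U \<noteq> []"
      using us ne unfolding us1_def admissible_def R_def by auto
    moreover have "length us1 - 1 \<in> broken_joins E us1"
      using broken_joins_rotate_last[OF i] unfolding us1_def by simp
    ultimately obtain q where q: "q < length us1"
      "alternating X Y (reverse_prefix q us1) \<or> alternating Y X (reverse_prefix q us1)"
      "card (broken_joins E (reverse_prefix q us1)) < card (broken_joins E us1)"
      using exists_reversal_with_fewer_broken_joins[OF sym _ _ _ _ fin ac ND]
      unfolding admissible_def by blast
    have "set (reverse_prefix q us1) \<subseteq> R"
      using set_reverse_prefix_subset[of q us1] admissible1 R_rev unfolding admissible_def by blast
    then have "admissible (reverse_prefix q us1)"
      using admissible1 q(1,2) set_concat_reverse_prefix[of q us1] unfolding admissible_def
      by (simp add: distinct_concat_reverse_prefix)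
    moreover have "card (broken_joins E us1) \<le> card (broken_joins E us)"
      unfolding us1_def by (rule card_broken_joins_rotate_le)
    ultimately show False using min q(3) by (meson leD order_less_le_trans)
  qed
  then show ?thesis using us unfolding admissible_def R_def by blast
qed

lemma last_concat: "us \<noteq> [] \<Longrightarrow> last us \<noteq> [] \<Longrightarrow> last (concat us) = last (last us)"
  by (induction us rule: rev_induct) auto

lemma hamilton_cycle_concat:
  assumes no_broken: "broken_joins E us = {}" and "us \<noteq> []"
    and paths: "\<forall>U\<in>set us. U \<noteq> [] \<and> successively E U"
    and dist: "distinct (concat us)" and V: "set (concat us) = V" and "3 \<le> length (concat us)"
  shows "hamilton_cycle V E (concat us)"
proof -
  define vs where "vs = concat us"
  define m where "m = length us"
  have "0 < m" using \<open>us \<noteq> []\<close> unfolding m_def by simp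
  have joins: "E (last (us ! i)) (hd (us ! (Suc i mod m)))" if "i < m" for i
    using no_broken that unfolding broken_joins_def m_def by blast
  have succ: "successively E vs" unfolding vs_def
  proof (rule successively_concat[OF paths], intro allI impI)
    fix i assume "Suc i < length us"
    then show "E (last (us ! i)) (hd (us ! Suc i))" using joins[of i] unfolding m_def by simp
  qed
  have wrap: "E (last vs) (hd vs)"
  proof -
    have "last us = us ! (m - 1)" "hd us = us ! 0"
      using \<open>us \<noteq> []\<close> unfolding m_def by (simp_all add: last_conv_nth hd_conv_nth)
    moreover have "last us \<noteq> []" "hd us \<noteq> []" using \<open>us \<noteq> []\<close> paths by auto
    ultimately show ?thesis
      using joins[of "m - 1"] \<open>0 < m\<close> \<open>us \<noteq> []\<close> unfolding vs_def
      by (simp add: last_concat hd_concat)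
  qed
  define L where "L = length vs"
  have "3 \<le> L" using assms(6) unfolding L_def vs_def .
  have "E (vs ! i) (vs ! ((i + 1) mod L))" if "i < L" for i
  proof (cases "Suc i < L")
    case True
    then show ?thesis using successively_nth[OF succ, of i] L_def by simp
  next
    case False
    then have "i = L - 1" using that by simp
    moreover have "vs \<noteq> []" using \<open>3 \<le> L\<close> unfolding L_def by auto
    then have "vs ! (L - 1) = last vs" "vs ! 0 = hd vs"
      unfolding L_def by (simp_all add: last_conv_nth hd_conv_nth)
    ultimately show ?thesis using wrap \<open>3 \<le> L\<close> by simp
  qed
  then show ?thesis unfolding hamilton_cycle_def using dist V \<open>3 \<le> L\<close> unfolding vs_def L_def by blast
qed

lemma edge_in_cycle_edges: "{a, b} \<in> cycle_edges (xs @ [a, b] @ ys)"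
proof -
  define vs where "vs = xs @ [a, b] @ ys"
  define i where "i = length xs"
  have "i < length vs" "vs ! i = a" "vs ! ((i + 1) mod length vs) = b"
    unfolding vs_def i_def by (auto simp: nth_append)
  then have "{a, b} \<in> cycle_edges vs" unfolding cycle_edges_def by blast
  then show ?thesis unfolding vs_def .
qed

lemma infix_edge_in_cycle_edges:
  assumes "U \<in> set us" "U = p @ [a, b] @ q"
  shows "{a, b} \<in> cycle_edges (concat us)"
proof -
  obtain us1 us2 where "us = us1 @ U # us2" using assms(1) by (meson split_list)
  then have "concat us = (concat us1 @ p) @ [a, b] @ (q @ concat us2)" using assms(2) by simp
  then show ?thesis by (simp only: edge_in_cycle_edges)
qed

fun interleave :: "'a list \<Rightarrow> 'a list \<Rightarrow> 'a list" where
  "interleave (x # xs) (y # ys) = x # y # interleave xs ys"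
| "interleave _ _ = []"

lemma length_interleave:
  "length xs = length ys \<Longrightarrow> length (interleave xs ys) = 2 * length xs"
  by (induction xs ys rule: interleave.induct) auto

lemma set_interleave: "length xs = length ys \<Longrightarrow> set (interleave xs ys) = set xs \<union> set ys"
  by (induction xs ys rule: interleave.induct) auto

lemma nth_interleave:
  "length xs = length ys \<Longrightarrow> i < 2 * length xs \<Longrightarrow>
     interleave xs ys ! i = (if even i then xs ! (i div 2) else ys ! (i div 2))"
proof (induction xs ys arbitrary: i rule: interleave.induct)
  case (1 x xs y ys)
  show ?case
  proof (cases i)
    case (Suc i')
    with 1 show ?thesis by (cases i') simp_all
  qed simp
qed auto

lemma distinct_concat_interleave:
  "length xs = length ys \<Longrightarrow> distinct (concat xs @ concat ys) \<Longrightarrow> distinct (concat (interleave xs ys))"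
  by (induction xs ys rule: interleave.induct) (auto simp: set_interleave)

lemma alternating_interleave:
  assumes "length xs = length ys"
    and "\<forall>U\<in>set xs. hd U \<in> X \<and> last U \<in> X" "\<forall>U\<in>set ys. hd U \<in> Y \<and> last U \<in> Y"
  shows "alternating X Y (interleave xs ys)"
  unfolding alternating_def
proof (intro allI impI)
  fix i assume "i < length (interleave xs ys)"
  then have i: "i < 2 * length xs" using assms(1) by (simp add: length_interleave)
  show "hd (interleave xs ys ! i) \<in> (if even i then X else Y) \<and>
        last (interleave xs ys ! i) \<in> (if even i then X else Y)"
    using assms i unfolding nth_interleave[OF assms(1) i] by auto
qed

lemma edge_of_path_in_cycle_edges:
  assumes dist: "distinct (concat us0)" and us: "set us \<subseteq> set us0 \<union> rev ` set us0"
    and same: "set (concat us) = set (concat us0)"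
    and U: "U \<in> set us0" "U = p @ [a, b] @ q"
  shows "{a, b} \<in> cycle_edges (concat us)"
proof -
  have "a \<in> set U" using U(2) by simp
  then have "a \<in> set (concat us)" using same U(1) by auto
  then obtain W where W: "W \<in> set us" "a \<in> set W" by auto
  obtain W0 where W0: "W0 \<in> set us0" "W = W0 \<or> W = rev W0" using W(1) us by auto
  have "a \<in> set W0" using W0(2) W(2) by auto
  moreover note \<open>a \<in> set U\<close>
  moreover have "set W0 \<inter> set U = {}" if "W0 \<noteq> U"
    using dist W0(1) U(1) that unfolding distinct_concat_iff by blast
  ultimately have "W0 = U" by blast
  then have "W = p @ [a, b] @ q \<or> W = rev q @ [b, a] @ rev p" using W0(2) U(2) by auto
  then show ?thesis using infix_edge_in_cycle_edges[OF W(1)] by (metis insert_commute)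
qed

theorem hamilton_cycle_through_paths:
  assumes sym: "\<forall>u v. E u v \<longrightarrow> E v u"
    and len: "length LX = length LY"
    and paths: "\<forall>U \<in> set LX \<union> set LY. U \<noteq> [] \<and> successively E U"
    and ends_X: "\<forall>U\<in>set LX. hd U \<in> X \<and> last U \<in> X"
    and ends_Y: "\<forall>U\<in>set LY. hd U \<in> Y \<and> last U \<in> Y"
    and dist: "distinct (concat LX @ concat LY)"
    and V: "set (concat LX) \<union> set (concat LY) = V" and "3 \<le> card V"
    and fin: "finite X" "finite Y" and ac: "almost_complete E X Y D"
    and ND: "real (length LX) > 2 * D"
  shows "\<exists>vs. hamilton_cycle V E vs \<and>
           (\<forall>U \<in> set LX \<union> set LY. \<forall>p a b q. U = p @ [a, b] @ q \<longrightarrow> {a, b} \<in> cycle_edges vs)"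
proof -
  define N where "N = length LX"
  define us0 where "us0 = interleave LX LY"
  have units0: "set us0 = set LX \<union> set LY" unfolding us0_def using len by (rule set_interleave)
  have len0: "length us0 = 2 * N" unfolding us0_def N_def using len by (rule length_interleave)
  have dist0: "distinct (concat us0)" unfolding us0_def using len dist by (rule distinct_concat_interleave)
  have V0: "set (concat us0) = V" using V units0 by auto
  have ne0: "\<forall>U\<in>set us0. U \<noteq> []" using paths units0 by blast
  have alt0: "alternating X Y us0" unfolding us0_def using len ends_X ends_Y by (rule alternating_interleave)
  obtain us where us: "length us = 2 * N" "set us \<subseteq> set us0 \<union> rev ` set us0"
    "distinct (concat us)" "set (concat us) = set (concat us0)" "broken_joins E us = {}"
    using exists_rearrangement_without_broken_joins[OF sym len0 dist0 ne0 alt0 fin ac] ND N_def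
    by blast
  have paths_us: "\<forall>U\<in>set us. U \<noteq> [] \<and> successively E U"
  proof
    fix U assume "U \<in> set us"
    then have "U \<in> set us0 \<or> rev U \<in> set us0" using us(2) by auto
    then show "U \<noteq> [] \<and> successively E U"
      using paths units0 successively_rev_symmetric[OF sym, of U] by (auto simp del: successively_rev)
  qed
  have "0 < N" using V len \<open>3 \<le> card V\<close> unfolding N_def by (cases LX) auto
  have V_us: "set (concat us) = V" using us(4) V0 by simp
  have "3 \<le> length (concat us)" using us(3) V_us \<open>3 \<le> card V\<close> by (metis distinct_card)
  moreover have "us \<noteq> []" using us(1) \<open>0 < N\<close> by auto
  ultimately have ham: "hamilton_cycle V E (concat us)"
    using hamilton_cycle_concat[OF us(5) _ paths_us us(3) V_us] by blast
  have "{a, b} \<in> cycle_edges (concat us)"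
    if "U \<in> set LX \<union> set LY" "U = p @ [a, b] @ q" for U p a b q
    using edge_of_path_in_cycle_edges[OF dist0 us(2,4)] that units0 by blast
  then show ?thesis using ham by blast
qed

text \<open>Greedy choice: each of the \<open>|I|\<close> requests needs two fresh elements, and each candidate set
  has room for all \<open>2 |I|\<close> of them.\<close>
lemma exists_disjoint_pair_choice:
  assumes "finite I"
    and "\<forall>i\<in>I. finite (S i) \<and> finite (T i) \<and> 2 * card I \<le> card (S i) \<and> 2 * card I \<le> card (T i)"
  shows "\<exists>f g. \<forall>i\<in>I. f i \<in> S i \<and> g i \<in> T i \<and>
           (\<forall>j\<in>I. f i \<noteq> g j \<and> (i \<noteq> j \<longrightarrow> f i \<noteq> f j \<and> g i \<noteq> g j))"
  using assms
proof (induction I rule: finite_induct)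
  case empty
  then show ?case by simp
next
  case (insert x F)
  have "\<forall>i\<in>F. finite (S i) \<and> finite (T i) \<and> 2 * card F \<le> card (S i) \<and> 2 * card F \<le> card (T i)"
    using insert.prems insert.hyps by auto
  then obtain f g where fg: "\<forall>i\<in>F. f i \<in> S i \<and> g i \<in> T i \<and>
      (\<forall>j\<in>F. f i \<noteq> g j \<and> (i \<noteq> j \<longrightarrow> f i \<noteq> f j \<and> g i \<noteq> g j))"
    using insert.IH by blast
  define U where "U = f ` F \<union> g ` F"
  have "finite U" using insert.hyps unfolding U_def by simp
  have cU: "card U \<le> 2 * card F"
    unfolding U_def using card_Un_le[of "f ` F" "g ` F"] card_image_le[OF insert.hyps(1)]
    by (metis add_le_mono mult_2 order_trans)
  have cS: "2 * card F + 2 \<le> card (S x)" and cT: "2 * card F + 2 \<le> card (T x)"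
    using insert.prems insert.hyps by auto
  obtain a where a: "a \<in> S x" "a \<notin> U"
  proof -
    have "\<not> S x \<subseteq> U"
    proof
      assume "S x \<subseteq> U"
      then have "card (S x) \<le> card U" using \<open>finite U\<close> by (simp add: card_mono)
      then show False using cU cS by linarith
    qed
    then show ?thesis using that by blast
  qed
  obtain b where b: "b \<in> T x" "b \<notin> insert a U"
  proof -
    have "\<not> T x \<subseteq> insert a U"
    proof
      assume "T x \<subseteq> insert a U"
      then have "card (T x) \<le> card (insert a U)" using \<open>finite U\<close> by (simp add: card_mono)
      also have "\<dots> \<le> card U + 1" using \<open>finite U\<close> by (simp add: card_insert_if)
      finally show False using cU cT by linarith
    qed
    then show ?thesis using that by blast
  qed
  have "\<forall>i\<in>insert x F. (f(x := a)) i \<in> S i \<and> (g(x := b)) i \<in> T i \<and>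
      (\<forall>j\<in>insert x F. (f(x := a)) i \<noteq> (g(x := b)) j \<and>
        (i \<noteq> j \<longrightarrow> (f(x := a)) i \<noteq> (f(x := a)) j \<and> (g(x := b)) i \<noteq> (g(x := b)) j))"
    using fg a b insert.hyps(2) unfolding U_def by auto
  then show ?case by blast
qed

lemma distinct_concat_map:
  assumes "distinct xs" "\<forall>x\<in>set xs. distinct (F x)"
    "\<forall>x\<in>set xs. \<forall>y\<in>set xs. x \<noteq> y \<longrightarrow> set (F x) \<inter> set (F y) = {}"
  shows "distinct (concat (map F xs))"
  using assms by (induction xs) auto

section \<open>Absorbing short paths\<close>

lemma distinct_concat_flanked:
  assumes "distinct ks"
    and "\<forall>i\<in>set ks. distinct (P i)"
    and "\<forall>i\<in>set ks. \<forall>j\<in>set ks. i \<noteq> j \<longrightarrow> set (P i) \<inter> set (P j) = {}"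
    and "\<forall>i\<in>set ks. \<forall>j\<in>set ks. f i \<notin> set (P j) \<and> g i \<notin> set (P j)"
    and "\<forall>i\<in>set ks. \<forall>j\<in>set ks. f i \<noteq> g j \<and> (i \<noteq> j \<longrightarrow> f i \<noteq> f j \<and> g i \<noteq> g j)"
  shows "distinct (concat (map (\<lambda>i. f i # P i @ [g i]) ks))"
proof (rule distinct_concat_map[OF assms(1)])
  show "\<forall>i\<in>set ks. distinct (f i # P i @ [g i])" using assms(2,4,5) by auto
  show "\<forall>i\<in>set ks. \<forall>j\<in>set ks. i \<noteq> j \<longrightarrow> set (f i # P i @ [g i]) \<inter> set (f j # P j @ [g j]) = {}"
  proof (intro ballI impI)
    fix i j assume ij: "i \<in> set ks" "j \<in> set ks" "i \<noteq> j"
    have "f i \<notin> set (P j)" "g i \<notin> set (P j)" "f j \<notin> set (P i)" "g j \<notin> set (P i)"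
      using assms(4) ij(1,2) by blast+
    moreover have "f i \<noteq> f j" "f i \<noteq> g j" "g i \<noteq> f j" "g i \<noteq> g j"
      using assms(5)[rule_format, OF ij(1,2)] assms(5)[rule_format, OF ij(2,1)] ij(3) by auto
    moreover have "set (P i) \<inter> set (P j) = {}" using assms(3) ij by blast
    ultimately show "set (f i # P i @ [g i]) \<inter> set (f j # P j @ [g j]) = {}" by auto
  qed
qed
lemma exists_paths_absorbing:
  fixes P :: "'i \<Rightarrow> 'a list"
  assumes sym: "\<forall>u v. E u v \<longrightarrow> E v u" and fin: "finite I" "finite G"
    and paths: "\<forall>i\<in>I. P i \<noteq> [] \<and> distinct (P i) \<and> successively E (P i) \<and> set (P i) \<inter> G = {}"
    and disj: "\<forall>i\<in>I. \<forall>j\<in>I. i \<noteq> j \<longrightarrow> set (P i) \<inter> set (P j) = {}"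
    and deg: "\<forall>i\<in>I. 2 * card I \<le> card {g\<in>G. E (hd (P i)) g} \<and> 2 * card I \<le> card {g\<in>G. E (last (P i)) g}"
  shows "\<exists>Ls. length Ls + card I = card G \<and> distinct (concat Ls) \<and>
           set (concat Ls) = G \<union> (\<Union>i\<in>I. set (P i)) \<and>
           (\<forall>U\<in>set Ls. U \<noteq> [] \<and> successively E U \<and> hd U \<in> G \<and> last U \<in> G) \<and>
           (\<forall>i\<in>I. \<exists>g g'. g # P i @ [g'] \<in> set Ls)"
proof -
  obtain f g where fg: "\<forall>i\<in>I. f i \<in> {x\<in>G. E (hd (P i)) x} \<and> g i \<in> {x\<in>G. E (last (P i)) x} \<and>
      (\<forall>j\<in>I. f i \<noteq> g j \<and> (i \<noteq> j \<longrightarrow> f i \<noteq> f j \<and> g i \<noteq> g j))"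
  proof -
    have "\<forall>i\<in>I. finite {x\<in>G. E (hd (P i)) x} \<and> finite {x\<in>G. E (last (P i)) x} \<and>
        2 * card I \<le> card {x\<in>G. E (hd (P i)) x} \<and> 2 * card I \<le> card {x\<in>G. E (last (P i)) x}"
      using deg fin(2) by simp
    from exists_disjoint_pair_choice[OF fin(1) this] show ?thesis using that by blast
  qed
  have ext: "f i \<in> G" "g i \<in> G" "E (f i) (hd (P i))" "E (last (P i)) (g i)"
    if "i \<in> I" for i
    using bspec[OF fg that] sym by auto
  define Used where "Used = f ` I \<union> g ` I"
  have "Used \<subseteq> G" using ext unfolding Used_def by auto
  have "card Used = 2 * card I"
  proof -
    have "inj_on f I" "inj_on g I" using fg by (auto simp: inj_on_def)
    moreover have "f ` I \<inter> g ` I = {}" using fg by auto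
    ultimately show ?thesis unfolding Used_def using fin(1) by (simp add: card_Un_disjoint card_image)
  qed
  obtain lI where lI: "set lI = I" "distinct lI" using finite_distinct_list[OF fin(1)] by blast
  obtain lG where lG: "set lG = G - Used" "distinct lG"
    using finite_distinct_list[of "G - Used"] fin(2) by blast
  define Ls where "Ls = map (\<lambda>i. f i # P i @ [g i]) lI @ map (\<lambda>x. [x]) lG"
  have len: "length Ls + card I = card G"
  proof -
    have "card (G - Used) = card G - 2 * card I" "2 * card I \<le> card G"
      using \<open>Used \<subseteq> G\<close> \<open>card Used = 2 * card I\<close> fin(2) card_mono[OF fin(2) \<open>Used \<subseteq> G\<close>]
      by (simp_all add: card_Diff_subset finite_subset)
    moreover have "length lI = card I" "length lG = card (G - Used)"
      using distinct_card lI lG by metis+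
    ultimately show ?thesis unfolding Ls_def by simp
  qed
  have "distinct (concat (map (\<lambda>i. f i # P i @ [g i]) lI))"
    using lI ext(1,2) paths disj fg by (intro distinct_concat_flanked) auto
  moreover have "set (concat (map (\<lambda>i. f i # P i @ [g i]) lI)) = Used \<union> (\<Union>i\<in>I. set (P i))"
    using lI unfolding Used_def by auto
  ultimately have "distinct (concat Ls)" "set (concat Ls) = G \<union> (\<Union>i\<in>I. set (P i))"
    using lG \<open>Used \<subseteq> G\<close> paths unfolding Ls_def by auto
  moreover have "successively E (f i # P i @ [g i])" if "i \<in> I" for i
    using ext[OF that] paths that by (auto simp: successively_append_iff successively_Cons)
  then have "\<forall>U\<in>set Ls. U \<noteq> [] \<and> successively E U \<and> hd U \<in> G \<and> last U \<in> G"
    using lI lG ext(1,2) unfolding Ls_def by auto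
  moreover have "\<forall>i\<in>I. \<exists>g g'. g # P i @ [g'] \<in> set Ls"
    using lI unfolding Ls_def by auto
  ultimately show ?thesis using len by blast
qed

section \<open>Superextremal bicliques\<close>

lemma card_neighbours_minus:
  assumes "finite X" "finite Y"
  shows "card {x\<in>X. E v x} \<le> card {x \<in> X - Y. E v x} + card Y"
proof -
  have "{x\<in>X. E v x} \<subseteq> {x \<in> X - Y. E v x} \<union> Y" by auto
  then have "card {x\<in>X. E v x} \<le> card ({x \<in> X - Y. E v x} \<union> Y)"
    using assms by (intro card_mono) auto
  also have "\<dots> \<le> card {x \<in> X - Y. E v x} + card Y" by (rule card_Un_le)
  finally show ?thesis .
qed

lemma card_non_neighbours_add_neighbours_le:
  assumes "finite X" "Y \<subseteq> X"
  shows "card {y\<in>Y. \<not> E v y} + card {x\<in>X. E v x} \<le> card X"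
proof -
  have "card {y\<in>Y. \<not> E v y} + card {x\<in>X. E v x} = card ({y\<in>Y. \<not> E v y} \<union> {x\<in>X. E v x})"
    using assms by (intro card_Un_disjoint[symmetric]) (auto intro: finite_subset)
  also have "\<dots> \<le> card X" using assms by (intro card_mono) auto
  finally show ?thesis .
qed

text \<open>Only conditions (B1)--(B5) are used, and the parameters only through the bounds below; the
  choice \<open>\<eta>, \<nu> \<le> 1/100\<close>, \<open>\<alpha> \<le> \<nu>/10\<close> in the theorem satisfies them.\<close>
locale superextremal_matching =
  fixes V :: "'a :: linorder set" and E :: "'a \<Rightarrow> 'a \<Rightarrow> bool"
    and A B :: "'a set" and M :: "'a set set" and \<alpha> \<eta> \<nu> :: real
  assumes graph: "simple_graph V E"
    and biclique: "superextremal_biclique \<alpha> \<eta> \<nu> V E A B"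
    and matching: "matching_in E B M"
    and card_M: "card M = card B - card A"
    and alpha_nonneg: "0 \<le> \<alpha>" and alpha_nu: "5 * \<alpha> \<le> \<nu>" and eta_alpha: "\<eta> + 5 * \<alpha> < 1 / 4"
    and three_le_card: "3 \<le> card V"
begin

abbreviation n :: real where "n \<equiv> real (card V)"

definition low_A :: "'a set" where
  "low_A = {a \<in> A. real (deg_in E a B) < (1/2 - \<eta>) * n}"

definition low_B :: "'a set" where
  "low_B = {b \<in> B. real (deg_in E b A) < (1/2 - \<eta>) * n}"

definition typical_A :: "'a set" where
  "typical_A = A - low_A"

definition typical_B :: "'a set" where
  "typical_B = B - low_B - \<Union>M"

text \<open>Each item is absorbed on the \<open>A\<close>-side as the path \<open>sorted_list_of_set e\<close>: a matching edge or a
  single vertex.\<close>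
definition B_items :: "'a set set" where
  "B_items = M \<union> (\<lambda>b. {b}) ` (low_B - \<Union>M)"

lemma E_sym: "\<forall>u v. E u v \<longrightarrow> E v u"
  using graph unfolding simple_graph_def by blast

lemma partition_V: "A \<union> B = V" "A \<inter> B = {}"
  using biclique unfolding superextremal_biclique_def Let_def by blast+

lemma finite_A: "finite A" and finite_B: "finite B"
  using graph partition_V unfolding simple_graph_def by auto

lemma card_A_plus_card_B: "card A + card B = card V"
  using partition_V finite_A finite_B by (metis card_Un_disjoint)

lemma card_A_le_card_B: "card A \<le> card B"
  and card_B_minus_card_A: "real (card B) - real (card A) \<le> \<alpha> * n"
  and card_low_A: "real (card low_A) \<le> \<alpha> * n"
  and deg_A: "\<forall>a\<in>A. \<nu> * n \<le> real (deg_in E a B)"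
  and card_low_B: "real (card low_B) \<le> \<alpha> * n"
  and deg_B: "\<forall>b\<in>B. (1/4 - \<eta>) * n \<le> real (deg_in E b A)"
  using biclique unfolding superextremal_biclique_def Let_def low_A_def low_B_def by blast+

lemma matching_edge: "e \<in> M \<Longrightarrow> \<exists>u v. e = {u, v} \<and> u \<in> B \<and> v \<in> B \<and> u \<noteq> v \<and> E u v"
  using matching graph unfolding matching_in_def simple_graph_def by metis

lemma finite_M: "finite M"
  using finite_subset[of M "Pow B"] finite_B matching_edge by blast

lemma card_matching_edge: "e \<in> M \<Longrightarrow> card e = 2"
  using matching_edge card_2_iff by metis

lemma card_Union_M: "card (\<Union>M) = 2 * card M"
proof -
  have "card (\<Union>M) = (\<Sum>e\<in>M. card e)"
    using matching finite_B matching_edge unfolding matching_in_def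
    by (intro card_Union_disjoint) (auto intro: finite_subset[OF _ finite_B])
  also have "\<dots> = (\<Sum>e\<in>M. 2)" using card_matching_edge by simp
  finally show ?thesis by simp
qed

lemma card_M_le: "real (card M) \<le> \<alpha> * n"
  using card_M card_A_le_card_B card_B_minus_card_A by linarith

lemma finite_low_B: "finite low_B" and finite_low_A: "finite low_A"
  and finite_Union_M: "finite (\<Union>M)"
  using finite_A finite_B finite_M matching_edge unfolding low_A_def low_B_def by auto

lemma card_B_items: "card B_items = card M + card (low_B - \<Union>M)"
proof -
  have "M \<inter> (\<lambda>b. {b}) ` (low_B - \<Union>M) = {}" using card_matching_edge by fastforce
  moreover have "card ((\<lambda>b. {b}) ` (low_B - \<Union>M)) = card (low_B - \<Union>M)"
    by (rule card_image) (auto simp: inj_on_def)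
  ultimately show ?thesis
    unfolding B_items_def using finite_M finite_low_B by (simp add: card_Un_disjoint)
qed

lemma card_B_items_le: "real (card B_items) \<le> 2 * \<alpha> * n"
proof -
  have "card (low_B - \<Union>M) \<le> card low_B" using finite_low_B by (intro card_mono) auto
  then show ?thesis using card_B_items card_M_le card_low_B by linarith
qed

lemma finite_B_items: "finite B_items"
  unfolding B_items_def using finite_M finite_low_B by simp

lemma B_items_subset: "e \<in> B_items \<Longrightarrow> e \<subseteq> low_B \<union> \<Union>M"
  unfolding B_items_def by auto

lemma Union_B_items: "\<Union>B_items = low_B \<union> \<Union>M"
  unfolding B_items_def by auto

lemma B_items_disjoint: "e \<in> B_items \<Longrightarrow> e' \<in> B_items \<Longrightarrow> e \<noteq> e' \<Longrightarrow> e \<inter> e' = {}"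
  using matching unfolding B_items_def matching_in_def disjoint_def by auto

lemma low_B_subset: "low_B \<subseteq> B" and Union_M_subset: "\<Union>M \<subseteq> B"
  unfolding low_B_def using matching_edge by auto

lemma path_matching_edge:
  "e \<in> M \<Longrightarrow> \<exists>x y. sorted_list_of_set e = [x, y] \<and> e = {x, y} \<and> E x y"
proof -
  assume "e \<in> M"
  then obtain u v where "e = {u, v}" "u \<noteq> v" "E u v" using matching_edge by blast
  then show ?thesis
    using E_sym by (cases "u < v") (auto simp: insert_commute)
qed

lemma path_B_item:
  assumes "e \<in> B_items"
  shows "sorted_list_of_set e \<noteq> [] \<and> distinct (sorted_list_of_set e) \<and>
    successively E (sorted_list_of_set e) \<and> set (sorted_list_of_set e) = e"
proof (cases "e \<in> M")
  case True
  then show ?thesis using path_matching_edge by fastforce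
next
  case False
  then show ?thesis using assms unfolding B_items_def by auto
qed

lemma many_typical_A_neighbours:
  assumes "b \<in> B"
  shows "2 * card B_items \<le> card {a \<in> typical_A. E b a}"
proof -
  have "card {x\<in>A. E b x} \<le> card {a \<in> typical_A. E b a} + card low_A"
    unfolding typical_A_def using finite_A finite_low_A by (rule card_neighbours_minus)
  moreover have "(1/4 - \<eta>) * n \<le> real (card {x\<in>A. E b x})"
    using deg_B assms unfolding deg_in_def by blast
  moreover have "5 * (\<alpha> * n) \<le> (1/4 - \<eta>) * n"
    using eta_alpha mult_right_mono[of "5 * \<alpha>" "1/4 - \<eta>" n] by simp
  ultimately show ?thesis using card_low_A card_B_items_le by linarith
qed

lemma many_typical_B_neighbours:
  assumes "a \<in> A"
  shows "2 * card low_A \<le> card {b \<in> typical_B. E a b}"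
proof -
  have "typical_B = B - (low_B \<union> \<Union>M)" unfolding typical_B_def by blast
  then have "card {x\<in>B. E a x} \<le> card {b \<in> typical_B. E a b} + card (low_B \<union> \<Union>M)"
    using card_neighbours_minus[OF finite_B, of "low_B \<union> \<Union>M"] finite_low_B finite_Union_M
    by simp
  moreover have "card (low_B \<union> \<Union>M) \<le> card low_B + 2 * card M"
    using card_Un_le[of low_B "\<Union>M"] card_Union_M by simp
  moreover have "\<nu> * n \<le> real (card {x\<in>B. E a x})"
    using deg_A assms unfolding deg_in_def by blast
  moreover have "5 * (\<alpha> * n) \<le> \<nu> * n"
    using alpha_nu mult_right_mono[of "5 * \<alpha>" \<nu> n] by simp
  ultimately show ?thesis using card_low_A card_low_B card_M_le by linarith
qed

lemma almost_complete_typical: "almost_complete E typical_A typical_B ((\<eta> + \<alpha>) * n)"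
  unfolding almost_complete_def
proof safe
  fix x assume "x \<in> typical_A"
  then have "(1/2 - \<eta>) * n \<le> real (card {y\<in>B. E x y})"
    unfolding typical_A_def low_A_def deg_in_def by auto
  moreover have "card {y\<in>typical_B. \<not> E x y} + card {y\<in>B. E x y} \<le> card B"
    using finite_B by (rule card_non_neighbours_add_neighbours_le) (auto simp: typical_B_def)
  moreover have "2 * real (card B) \<le> n + \<alpha> * n"
    using card_A_plus_card_B card_B_minus_card_A by linarith
  moreover have "0 \<le> \<alpha> * n" using alpha_nonneg by simp
  ultimately show "real (card {y\<in>typical_B. \<not> E x y}) \<le> (\<eta> + \<alpha>) * n"
    by (simp add: algebra_simps)
next
  fix y assume "y \<in> typical_B"
  then have "(1/2 - \<eta>) * n \<le> real (card {x\<in>A. E y x})"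
    unfolding typical_B_def low_B_def deg_in_def by auto
  moreover have "card {x\<in>typical_A. \<not> E y x} + card {x\<in>A. E y x} \<le> card A"
    using finite_A by (rule card_non_neighbours_add_neighbours_le) (auto simp: typical_A_def)
  moreover have "2 * real (card A) \<le> n"
    using card_A_plus_card_B card_A_le_card_B by linarith
  moreover have "0 \<le> \<alpha> * n" using alpha_nonneg by simp
  ultimately show "real (card {x\<in>typical_A. \<not> E y x}) \<le> (\<eta> + \<alpha>) * n"
    by (simp add: algebra_simps)
qed

text \<open>This is where \<open>|M| = |B| - |A|\<close> enters: both sides are left with equally many paths.\<close>
lemma card_typical_balance: "card typical_A + card low_A = card typical_B + card B_items"
proof -
  have "A \<inter> low_A = low_A" unfolding low_A_def by blast
  then have "card typical_A + card low_A = card A"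
    unfolding typical_A_def using card_Int_Diff[OF finite_A, of low_A] by simp
  moreover have "B \<inter> (low_B \<union> \<Union>M) = low_B \<union> \<Union>M" "typical_B = B - (low_B \<union> \<Union>M)"
    using low_B_subset Union_M_subset unfolding typical_B_def by blast+
  then have "card typical_B + card (low_B \<union> \<Union>M) = card B"
    using card_Int_Diff[OF finite_B, of "low_B \<union> \<Union>M"] by simp
  moreover have "card (low_B \<union> \<Union>M) = 2 * card M + card (low_B - \<Union>M)"
    using card_Un_disjoint[of "\<Union>M" "low_B - \<Union>M"] finite_low_B finite_Union_M card_Union_M
    by (simp add: Un_commute)
  ultimately show ?thesis using card_B_items card_M card_A_le_card_B by linarith
qed

lemma many_typical_B: "2 * ((\<eta> + \<alpha>) * n) < real (card typical_B) - real (card low_A)"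
proof -
  have "typical_B = B - (low_B \<union> \<Union>M)" unfolding typical_B_def by blast
  then have "card B \<le> card typical_B + card (low_B \<union> \<Union>M)"
    using card_Int_Diff[OF finite_B, of "low_B \<union> \<Union>M"]
      card_mono[of "low_B \<union> \<Union>M" "B \<inter> (low_B \<union> \<Union>M)"] finite_low_B finite_Union_M by simp
  moreover have "card (low_B \<union> \<Union>M) \<le> card low_B + 2 * card M"
    using card_Un_le[of low_B "\<Union>M"] card_Union_M by simp
  moreover have "n \<le> 2 * real (card B)"
    using card_A_plus_card_B card_A_le_card_B by linarith
  moreover have "0 < (1/2 - 2 * \<eta> - 6 * \<alpha>) * n"
    using eta_alpha alpha_nonneg three_le_card by (intro mult_pos_pos) auto
  ultimately show ?thesis using card_low_A card_low_B card_M_le by (simp add: algebra_simps)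
qed

lemma finite_typical: "finite typical_A" "finite typical_B"
  unfolding typical_A_def typical_B_def using finite_A finite_B by auto

lemma exists_paths_absorbing_B_items:
  "\<exists>LX. length LX + card B_items = card typical_A \<and> distinct (concat LX) \<and>
     set (concat LX) = typical_A \<union> low_B \<union> \<Union>M \<and>
     (\<forall>U\<in>set LX. U \<noteq> [] \<and> successively E U \<and> hd U \<in> typical_A \<and> last U \<in> typical_A) \<and>
     (\<forall>e\<in>B_items. \<exists>g g'. g # sorted_list_of_set e @ [g'] \<in> set LX)"
proof -
  let ?P = "sorted_list_of_set :: 'a set \<Rightarrow> 'a list"
  have item_in_B: "e \<subseteq> B" if "e \<in> B_items" for e
    using B_items_subset[OF that] low_B_subset Union_M_subset by blast
  have "\<forall>e\<in>B_items. ?P e \<noteq> [] \<and> distinct (?P e) \<and> successively E (?P e) \<and> set (?P e) \<inter> typical_A = {}"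
    using path_B_item item_in_B partition_V(2) unfolding typical_A_def by blast
  moreover have "\<forall>e\<in>B_items. \<forall>e'\<in>B_items. e \<noteq> e' \<longrightarrow> set (?P e) \<inter> set (?P e') = {}"
    using path_B_item B_items_disjoint by simp
  moreover have "\<forall>e\<in>B_items. 2 * card B_items \<le> card {g\<in>typical_A. E (hd (?P e)) g} \<and>
      2 * card B_items \<le> card {g\<in>typical_A. E (last (?P e)) g}"
  proof
    fix e assume "e \<in> B_items"
    then have "hd (?P e) \<in> e" "last (?P e) \<in> e" using path_B_item hd_in_set last_in_set by blast+
    with \<open>e \<in> B_items\<close> have "hd (?P e) \<in> B" "last (?P e) \<in> B" using item_in_B by blast+
    then show "2 * card B_items \<le> card {g\<in>typical_A. E (hd (?P e)) g} \<and>
        2 * card B_items \<le> card {g\<in>typical_A. E (last (?P e)) g}"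
      using many_typical_A_neighbours by blast
  qed
  ultimately have "\<exists>LX. length LX + card B_items = card typical_A \<and> distinct (concat LX) \<and>
      set (concat LX) = typical_A \<union> (\<Union>e\<in>B_items. set (?P e)) \<and>
      (\<forall>U\<in>set LX. U \<noteq> [] \<and> successively E U \<and> hd U \<in> typical_A \<and> last U \<in> typical_A) \<and>
      (\<forall>e\<in>B_items. \<exists>g g'. g # ?P e @ [g'] \<in> set LX)"
    by (intro exists_paths_absorbing[OF E_sym finite_B_items finite_typical(1)])
  moreover have "(\<Union>e\<in>B_items. set (?P e)) = low_B \<union> \<Union>M"
    using path_B_item Union_B_items by auto
  ultimately show ?thesis by (simp add: Un_assoc)
qed

lemma exists_paths_absorbing_low_A:
  "\<exists>LY. length LY + card low_A = card typical_B \<and> distinct (concat LY) \<and>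
     set (concat LY) = typical_B \<union> low_A \<and>
     (\<forall>U\<in>set LY. U \<noteq> [] \<and> successively E U \<and> hd U \<in> typical_B \<and> last U \<in> typical_B)"
proof -
  have "\<forall>a\<in>low_A. [a] \<noteq> [] \<and> distinct [a] \<and> successively E [a] \<and> set [a] \<inter> typical_B = {}"
    using partition_V(2) unfolding low_A_def typical_B_def by auto
  moreover have "\<forall>a\<in>low_A. 2 * card low_A \<le> card {g\<in>typical_B. E (hd [a]) g} \<and>
      2 * card low_A \<le> card {g\<in>typical_B. E (last [a]) g}"
    using many_typical_B_neighbours unfolding low_A_def by simp
  moreover have "\<forall>a\<in>low_A. \<forall>b\<in>low_A. a \<noteq> b \<longrightarrow> set [a] \<inter> set [b] = {}" by simp
  ultimately have "\<exists>LY. length LY + card low_A = card typical_B \<and> distinct (concat LY) \<and>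
      set (concat LY) = typical_B \<union> (\<Union>a\<in>low_A. set [a]) \<and>
      (\<forall>U\<in>set LY. U \<noteq> [] \<and> successively E U \<and> hd U \<in> typical_B \<and> last U \<in> typical_B) \<and>
      (\<forall>a\<in>low_A. \<exists>g g'. g # [a] @ [g'] \<in> set LY)"
    by (intro exists_paths_absorbing[OF E_sym finite_low_A finite_typical(2)])
  then show ?thesis by auto
qed

theorem hamilton_cycle_containing_matching:
  "\<exists>vs. hamilton_cycle V E vs \<and> M \<subseteq> cycle_edges vs"
proof -
  obtain LX where LX: "length LX + card B_items = card typical_A" "distinct (concat LX)"
    "set (concat LX) = typical_A \<union> low_B \<union> \<Union>M"
    "\<forall>U\<in>set LX. U \<noteq> [] \<and> successively E U \<and> hd U \<in> typical_A \<and> last U \<in> typical_A"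
    "\<forall>e\<in>B_items. \<exists>g g'. g # sorted_list_of_set e @ [g'] \<in> set LX"
    using exists_paths_absorbing_B_items by blast
  obtain LY where LY: "length LY + card low_A = card typical_B" "distinct (concat LY)"
    "set (concat LY) = typical_B \<union> low_A"
    "\<forall>U\<in>set LY. U \<noteq> [] \<and> successively E U \<and> hd U \<in> typical_B \<and> last U \<in> typical_B"
    using exists_paths_absorbing_low_A by blast
  have "length LX = length LY" using LX(1) LY(1) card_typical_balance by linarith
  have "(typical_A \<union> low_B \<union> \<Union>M) \<inter> (typical_B \<union> low_A) = {}"
    "typical_A \<union> low_B \<union> \<Union>M \<union> (typical_B \<union> low_A) = V"
    using partition_V low_B_subset Union_M_subset unfolding typical_A_def typical_B_def low_A_def
    by blast+
  then have dist: "distinct (concat LX @ concat LY)"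
    and cover: "set (concat LX) \<union> set (concat LY) = V"
    using LX(2,3) LY(2,3) by simp_all
  have paths: "\<forall>U \<in> set LX \<union> set LY. U \<noteq> [] \<and> successively E U"
    and ends: "\<forall>U\<in>set LX. hd U \<in> typical_A \<and> last U \<in> typical_A"
      "\<forall>U\<in>set LY. hd U \<in> typical_B \<and> last U \<in> typical_B"
    using LX(4) LY(4) by blast+
  have "2 * ((\<eta> + \<alpha>) * n) < real (length LX)"
    using many_typical_B LY(1) \<open>length LX = length LY\<close> by linarith
  then obtain vs where vs: "hamilton_cycle V E vs"
    and edges: "\<forall>U \<in> set LX \<union> set LY. \<forall>p a b q. U = p @ [a, b] @ q \<longrightarrow> {a, b} \<in> cycle_edges vs"
    using hamilton_cycle_through_paths[OF E_sym \<open>length LX = length LY\<close> paths ends dist cover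
        three_le_card finite_typical almost_complete_typical]
    by blast
  have "e \<in> cycle_edges vs" if e: "e \<in> M" for e
  proof -
    obtain x y where xy: "sorted_list_of_set e = [x, y]" "e = {x, y}"
      using path_matching_edge[OF e] by blast
    moreover have "e \<in> B_items" using e unfolding B_items_def by simp
    then obtain g g' where "[g] @ [x, y] @ [g'] \<in> set LX" using LX(5) xy by force
    ultimately show ?thesis using edges by blast
  qed
  with vs show ?thesis by blast
qed

end

theorem mainTheorem13:
  shows "\<exists>\<eta>0>0. \<forall>\<eta>. 0 < \<eta> \<and> \<eta> \<le> \<eta>0 \<longrightarrow>
     (\<exists>\<nu>0>0. \<forall>\<nu>. 0 < \<nu> \<and> \<nu> \<le> \<nu>0 \<longrightarrow>
       (\<exists>\<alpha>0>0. \<forall>\<alpha>. 0 < \<alpha> \<and> \<alpha> \<le> \<alpha>0 \<longrightarrow>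
         (\<exists>n0::nat. \<forall>(V::nat set) E A B M.
            simple_graph V E \<longrightarrow> card V \<ge> n0 \<longrightarrow>
            superextremal_biclique \<alpha> \<eta> \<nu> V E A B \<longrightarrow>
            matching_in E B M \<longrightarrow> card M = card B - card A \<longrightarrow>
            (\<exists>vs. hamilton_cycle V E vs \<and> M \<subseteq> cycle_edges vs))))"
  apply (rule exI[of _ "1/100"], simp, intro allI impI)
  apply (rule exI[of _ "1/100"], simp, intro allI impI)
  subgoal for \<eta> \<nu>
    apply (rule exI[of _ "\<nu> / 10"], simp, intro allI impI)
    apply (rule exI[of _ 3], intro allI impI)
    by (rule superextremal_matching.hamilton_cycle_containing_matching, unfold_locales) auto
  done

end
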